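(* Let $m\ge1$, $n\ge1$, $N>2n$, let $\Sigma_0,\dots,\Sigma_n\in\mathbb R^{m\times m}$ and let $\mathbf T_n$ be the block-Toeplitz matrix whose $(i,j)$ block ($i,j=0,\dots,n$) is $\Sigma_{i-j}$ if $i\ge j$ and $\Sigma_{j-i}^\top$ if $i<j$. Let $(\Lambda_k,\Theta_k)$, $k\ge1$, be a bounded sequence in $\mathcal L_+$ such that $A(\Lambda_k,\Theta_k)$ converges to a singular matrix. Then $J(\Lambda_k,\Theta_k)\to\infty$, where $J(\Lambda,\Theta)=\operatorname{Tr}(\Lambda\mathbf T_n)-\log\det A(\Lambda,\Theta)$.
   Context: $\mathfrak S_k$ denotes the space of real symmetric $mk\times mk$ matrices. $E_n$ is the $mN\times m(n+1)$ matrix with $N\times(n+1)$ blocks of size $m\times m$ whose $(i,i)$ blocks ($i=1,\dots,n+1$) are $I_m$ and other blocks $0$. $\mathbf U_N$ is the $mN\times mN$ block shift matrix whose $(i,i+1)$ blocks ($i=1,\dots,N-1$) and $(N,1)$ block are $I_m$, others $0$. The linear map $A:\mathfrak S_{n+1}\times\mathfrak S_N\to\mathfrak S_N$ is $A(\Lambda,\Theta)=E_n\Lambda E_n^\top+\mathbf U_N\Theta\mathbf U_N^\top-\Theta$, and $\mathcal L_+=\{(\Lambda,\Theta)\in(\ker A)^\perp:A(\Lambda,\Theta)>0\}$, orthogonality being with respect to $\langle(\Lambda_1,\Theta_1),(\Lambda_2,\Theta_2)\rangle=\operatorname{Tr}(\Lambda_1\Lambda_2)+\operatorname{Tr}(\Theta_1\Theta_2)$.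 *)

theory Defs
  imports Complex_Main "Jordan_Normal_Form.Determinant"
begin

text \<open>Block (i,j) of size m x m of a matrix M consists of the entries M(r,c) with
  r div m = i, c div m = j (0-based indices).\<close>

definition mtrace :: "real mat \<Rightarrow> real" where
  "mtrace M = (\<Sum>i<dim_row M. M $$ (i, i))"

definition Sym :: "nat \<Rightarrow> nat \<Rightarrow> real mat set" where
  "Sym m k = {M. M \<in> carrier_mat (m*k) (m*k) \<and> transpose_mat M = M}"

definition Tmat :: "nat \<Rightarrow> nat \<Rightarrow> (nat \<Rightarrow> real mat) \<Rightarrow> real mat" where
  "Tmat m n Sig = mat (m*(n+1)) (m*(n+1)) (\<lambda>(r,c).
     (let i = r div m; j = c div m; a = r mod m; b = c mod m in
      if j \<le> i then Sig (i - j) $$ (a, b) else Sig (j - i) $$ (b, a)))"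

definition Emat :: "nat \<Rightarrow> nat \<Rightarrow> nat \<Rightarrow> real mat" where
  "Emat m n N = mat (m*N) (m*(n+1)) (\<lambda>(r,c).
     if r div m = c div m \<and> r mod m = c mod m then 1 else 0)"

text \<open>U_N: mN x mN block shift, blocks (i,i+1) for i = 1..N-1 (1-based) and (N,1) are identity.\<close>
definition Umat :: "nat \<Rightarrow> nat \<Rightarrow> real mat" where
  "Umat m N = mat (m*N) (m*N) (\<lambda>(r,c).
     if r mod m = c mod m \<and>
        ((r div m + 1 < N \<and> c div m = r div m + 1) \<or> (r div m + 1 = N \<and> c div m = 0))
     then 1 else 0)"

definition Aop :: "nat \<Rightarrow> nat \<Rightarrow> nat \<Rightarrow> real mat \<Rightarrow> real mat \<Rightarrow> real mat" where
  "Aop m n N Lam Th =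
     Emat m n N * Lam * transpose_mat (Emat m n N)
     + Umat m N * Th * transpose_mat (Umat m N) - Th"

definition pair_inner :: "real mat \<times> real mat \<Rightarrow> real mat \<times> real mat \<Rightarrow> real" where
  "pair_inner p q = mtrace (fst p * fst q) + mtrace (snd p * snd q)"

definition kerA :: "nat \<Rightarrow> nat \<Rightarrow> nat \<Rightarrow> (real mat \<times> real mat) set" where
  "kerA m n N = {(Lam, Th). Lam \<in> Sym m (n+1) \<and> Th \<in> Sym m N \<and>
                    Aop m n N Lam Th = 0\<^sub>m (m*N) (m*N)}"

definition kerA_perp :: "nat \<Rightarrow> nat \<Rightarrow> nat \<Rightarrow> (real mat \<times> real mat) set" where
  "kerA_perp m n N = {(Lam, Th). Lam \<in> Sym m (n+1) \<and> Th \<in> Sym m N \<and>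
                    (\<forall>q \<in> kerA m n N. pair_inner (Lam, Th) q = 0)}"

definition pos_def :: "real mat \<Rightarrow> bool" where
  "pos_def M \<longleftrightarrow> square_mat M \<and> transpose_mat M = M \<and>
     (\<forall>v \<in> carrier_vec (dim_row M). v \<noteq> 0\<^sub>v (dim_row M) \<longrightarrow> v \<bullet> (M *\<^sub>v v) > 0)"

definition Lplus :: "nat \<Rightarrow> nat \<Rightarrow> nat \<Rightarrow> (real mat \<times> real mat) set" where
  "Lplus m n N = {(Lam, Th). (Lam, Th) \<in> kerA_perp m n N \<and> pos_def (Aop m n N Lam Th)}"

definition Jfun :: "nat \<Rightarrow> nat \<Rightarrow> nat \<Rightarrow> (nat \<Rightarrow> real mat) \<Rightarrow> real mat \<Rightarrow> real mat \<Rightarrow> real" where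
  "Jfun m n N Sig Lam Th = mtrace (Lam * Tmat m n Sig) - ln (det (Aop m n N Lam Th))"

end

theory Submission imports Defs begin

text \<open>The trace term of J stays bounded, because the Lambda_k are bounded and T_n is fixed.
  The determinant is a polynomial in the entries, so det A(Lambda_k, Theta_k) tends to the
  determinant of the singular limit, i.e. to 0, while staying positive since each
  A(Lambda_k, Theta_k) is positive definite. Hence -log det diverges to +\<infinity>, and so does J.\<close>

lemma smult_mat_mult_vec:
  fixes A :: "'a :: comm_ring mat"
  assumes "A \<in> carrier_mat nr nc" and "v \<in> carrier_vec nc"
  shows "(k \<cdot>\<^sub>m A) *\<^sub>v v = k \<cdot>\<^sub>v (A *\<^sub>v v)"
  using assms by (intro eq_vecI) (auto simp: scalar_prod_def sum_distrib_left mult.assoc)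

lemma tendsto_det:
  fixes A :: "'b \<Rightarrow> 'a :: real_normed_field mat"
  assumes "\<And>x. A x \<in> carrier_mat n n" and "M \<in> carrier_mat n n"
    and "\<And>i j. i < n \<Longrightarrow> j < n \<Longrightarrow> ((\<lambda>x. A x $$ (i, j)) \<longlongrightarrow> M $$ (i, j)) F"
  shows "((\<lambda>x. det (A x)) \<longlongrightarrow> det M) F"
proof -
  have "((\<lambda>x. \<Sum>p \<in> {p. p permutes {0..<n}}. signof p * (\<Prod>i = 0..<n. A x $$ (i, p i)))
     \<longlongrightarrow> (\<Sum>p \<in> {p. p permutes {0..<n}}. signof p * (\<Prod>i = 0..<n. M $$ (i, p i)))) F"
  proof (intro tendsto_sum tendsto_mult tendsto_const tendsto_prod)
    fix p i assume "p \<in> {p. p permutes {0..<n}}" and "i \<in> {0..<n}"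
    then show "((\<lambda>x. A x $$ (i, p i)) \<longlongrightarrow> M $$ (i, p i)) F"
      by (intro assms(3)) (auto dest: permutes_in_image)
  qed
  then show ?thesis
    by (simp only: det_def'[OF assms(1)] det_def'[OF assms(2)])
qed

lemma quadratic_form_convex_comb_pos:
  fixes A B :: "real mat"
  assumes A: "A \<in> carrier_mat n n" and B: "B \<in> carrier_mat n n" and t: "0 \<le> t" "t \<le> 1"
    and v: "v \<in> carrier_vec n"
    and pos: "v \<bullet> (A *\<^sub>v v) > 0" "v \<bullet> (B *\<^sub>v v) > 0"
  shows "v \<bullet> ((t \<cdot>\<^sub>m A + (1 - t) \<cdot>\<^sub>m B) *\<^sub>v v) > 0"
proof -
  have "v \<bullet> ((t \<cdot>\<^sub>m A + (1 - t) \<cdot>\<^sub>m B) *\<^sub>v v) = t * (v \<bullet> (A *\<^sub>v v)) + (1 - t) * (v \<bullet> (B *\<^sub>v v))"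
    using A B v by (simp add: add_mult_distrib_mat_vec[of _ n n] smult_mat_mult_vec[of _ n n]
        scalar_prod_add_distrib[of _ n])
  also have "\<dots> > 0"
    using pos t by (cases "t = 0") (auto intro: add_pos_nonneg)
  finally show ?thesis .
qed

lemma det_pos_if_pos_def:
  fixes A :: "real mat"
  assumes "pos_def A"
  shows "det A > 0"
proof (rule ccontr)
  txt \<open>The segment from A to the identity consists of positive definite, hence nonsingular,
    matrices, so its determinant cannot change sign.\<close>
  define n where "n = dim_row A"
  have A: "A \<in> carrier_mat n n" and pos: "\<And>v. v \<in> carrier_vec n \<Longrightarrow> v \<noteq> 0\<^sub>v n \<Longrightarrow> v \<bullet> (A *\<^sub>v v) > 0"
    using assms unfolding pos_def_def n_def by auto
  define P where "P t = t \<cdot>\<^sub>m 1\<^sub>m n + (1 - t) \<cdot>\<^sub>m A" for t :: real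
  have P: "P t \<in> carrier_mat n n" for t using A by (simp add: P_def)
  assume "\<not> det A > 0"
  moreover have "P 0 = A" and "P 1 = 1\<^sub>m n"
    using A by (auto simp: P_def)
  moreover have "continuous_on {0..1} (\<lambda>t. det (P t))"
    unfolding continuous_on_def
    using A by (auto simp: P_def intro!: tendsto_det tendsto_add tendsto_mult tendsto_diff)
  ultimately obtain t where t: "0 \<le> t" "t \<le> 1" "det (P t) = 0"
    using IVT'[of "\<lambda>t. det (P t)" 0 0 1] by auto
  then obtain v where v: "v \<in> carrier_vec n" "v \<noteq> 0\<^sub>v n" "P t *\<^sub>v v = 0\<^sub>v n"
    using det_0_iff_vec_prod_zero[OF P] by blast
  have "v \<bullet> (P t *\<^sub>v v) > 0"
    unfolding P_def
  proof (rule quadratic_form_convex_comb_pos[OF _ A t(1,2) v(1) _ pos[OF v(1,2)]])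
    show "v \<bullet> (1\<^sub>m n *\<^sub>v v) > 0"
      using v conjugate_square_greater_0_vec[OF v(1)] by simp
  qed simp
  with v show False by simp
qed

lemma abs_mtrace_mult_le:
  fixes L T :: "real mat"
  assumes L: "L \<in> carrier_mat d d" and T: "T \<in> carrier_mat d d"
    and bound: "\<forall>i<d. \<forall>j<d. \<bar>L $$ (i, j)\<bar> \<le> B"
  shows "\<bar>mtrace (L * T)\<bar> \<le> B * (\<Sum>i<d. \<Sum>j<d. \<bar>T $$ (j, i)\<bar>)"
proof -
  have "mtrace (L * T) = (\<Sum>i<d. \<Sum>j<d. L $$ (i, j) * T $$ (j, i))"
    using L T unfolding mtrace_def
    by (auto simp: scalar_prod_def lessThan_atLeast0 intro!: sum.cong)
  also have "\<bar>\<dots>\<bar> \<le> (\<Sum>i<d. \<Sum>j<d. \<bar>L $$ (i, j)\<bar> * \<bar>T $$ (j, i)\<bar>)"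
    by (rule order_trans[OF sum_abs sum_mono]) (auto intro: order_trans[OF sum_abs] simp: abs_mult)
  also have "\<dots> \<le> (\<Sum>i<d. \<Sum>j<d. B * \<bar>T $$ (j, i)\<bar>)"
    using bound by (intro sum_mono mult_right_mono) auto
  finally show ?thesis by (simp add: sum_distrib_left)
qed

lemma filterlim_uminus_ln_at_top:
  fixes f :: "'a \<Rightarrow> real"
  assumes "\<forall>\<^sub>F x in F. f x > 0" and "(f \<longlongrightarrow> 0) F"
  shows "filterlim (\<lambda>x. - ln (f x)) at_top F"
proof -
  have "filterlim f (at_right 0) F"
    using assms by (intro tendsto_imp_filterlim_at_right)
  then have "filterlim (\<lambda>x. ln (f x)) at_bot F"
    by (rule filterlim_compose[OF ln_at_0])
  then show ?thesis
    by (simp add: filterlim_uminus_at_top)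
qed

lemma filterlim_at_top_add_bounded:
  fixes f g :: "'a \<Rightarrow> real"
  assumes "\<And>x. \<bar>f x\<bar> \<le> C" and "filterlim g at_top F"
  shows "filterlim (\<lambda>x. f x + g x) at_top F"
proof (rule filterlim_at_top_mono)
  have "- C \<le> f x" for x
    using assms(1)[of x] by linarith
  then show "\<forall>\<^sub>F x in F. - C + g x \<le> f x + g x"
    by simp
  show "filterlim (\<lambda>x. - C + g x) at_top F"
    by (rule filterlim_tendsto_add_at_top[OF tendsto_const assms(2)])
qed

lemma LplusD:
  assumes "(Lam, Th) \<in> Lplus m n N"
  shows "Lam \<in> carrier_mat (m * (n + 1)) (m * (n + 1))"
    and "Aop m n N Lam Th \<in> carrier_mat (m * N) (m * N)"
    and "pos_def (Aop m n N Lam Th)"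
  using assms unfolding Lplus_def kerA_perp_def Sym_def Aop_def pos_def_def by auto

theorem lemma5:
  fixes m n N :: nat and Sig :: "nat \<Rightarrow> real mat"
    and Lam Th :: "nat \<Rightarrow> real mat"
  assumes "m \<ge> 1" and "n \<ge> 1" and "N > 2 * n"
    and "\<forall>i\<le>n. Sig i \<in> carrier_mat m m"
    and "\<forall>k. (Lam k, Th k) \<in> Lplus m n N"
    and "\<exists>B. \<forall>k. (\<forall>i<m*(n+1). \<forall>j<m*(n+1). \<bar>Lam k $$ (i,j)\<bar> \<le> B) \<and>
                 (\<forall>i<m*N. \<forall>j<m*N. \<bar>Th k $$ (i,j)\<bar> \<le> B)"
    and "M \<in> carrier_mat (m*N) (m*N)" and "det M = 0"
    and "\<forall>i<m*N. \<forall>j<m*N. (\<lambda>k. Aop m n N (Lam k) (Th k) $$ (i,j)) \<longlonglongrightarrow> M $$ (i,j)"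
  shows "filterlim (\<lambda>k. Jfun m n N Sig (Lam k) (Th k)) at_top sequentially"
proof -
  define A where "A k = Aop m n N (Lam k) (Th k)" for k
  define T where "T = Tmat m n Sig"
  have T: "T \<in> carrier_mat (m * (n + 1)) (m * (n + 1))"
    by (simp add: T_def Tmat_def)
  obtain B where B: "\<And>k. \<forall>i<m*(n+1). \<forall>j<m*(n+1). \<bar>Lam k $$ (i, j)\<bar> \<le> B"
    using assms(6) by blast
  have trace_bounded: "\<bar>mtrace (Lam k * T)\<bar> \<le> B * (\<Sum>i<m*(n+1). \<Sum>j<m*(n+1). \<bar>T $$ (j, i)\<bar>)" for k
    using abs_mtrace_mult_le[OF LplusD(1)[OF assms(5)[rule_format]] T B] .
  have "(\<lambda>k. det (A k)) \<longlonglongrightarrow> 0"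
    using tendsto_det[of A "m * N" M] LplusD(2)[OF assms(5)[rule_format]] assms(7-9)
    unfolding A_def by simp
  then have "filterlim (\<lambda>k. - ln (det (A k))) at_top sequentially"
    using det_pos_if_pos_def[OF LplusD(3)[OF assms(5)[rule_format]]]
    by (intro filterlim_uminus_ln_at_top) (auto simp: A_def)
  from filterlim_at_top_add_bounded[where f = "\<lambda>k. mtrace (Lam k * T)", OF trace_bounded this]
  show ?thesis
    unfolding Jfun_def A_def T_def[symmetric] by simp
qed

end
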